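(* For $\lambda=(\lambda_1,\dots,\lambda_l)\in\mathscr{P}^n_C$ (with $l\ge1$), writing $x_\lambda=v(\lambda)t_{-\xi(\lambda)}$ with $v(\lambda)\in W$, $\xi(\lambda)\in Q^\vee$, we have $$v(\lambda)=v_{\lambda_l}\cdots v_{\lambda_2}v_{\lambda_1},\qquad \xi(\lambda)=\varepsilon_1+v_{\lambda_1}^{-1}\varepsilon_1+v_{\lambda_1}^{-1}v_{\lambda_2}^{-1}\varepsilon_1+\cdots+v_{\lambda_1}^{-1}\cdots v_{\lambda_{l-1}}^{-1}\varepsilon_1.$$
   Context: $W_{\mathrm{af}}$ is the affine Weyl group of type $C_n^{(1)}$ generated by $s_0,\dots,s_n$; $W=\langle s_1,\dots,s_n\rangle$ acts on $X^\vee=\bigoplus_{i=1}^n\mathbb{Z}\varepsilon_i$ by: $s_i$ ($1\le i\le n-1$) swaps $\varepsilon_i,\varepsilon_{i+1}$; $s_n$ negates $\varepsilon_n$. $Q^\vee=\bigoplus\mathbb{Z}\alpha_i^\vee$, $\alpha_i^\vee=\varepsilon_i-\varepsilon_{i+1}$ ($i<n$), $\alpha_n^\vee=\varepsilon_n$. $W_{\mathrm{af}}\cong W\ltimes Q^\vee$, elements $wt_\xi$ with $wt_\xi w^{-1}=t_{w\xi}$, and $s_0=s_\theta t_{-\varepsilon_1}$ where $s_\theta=s_1\cdots s_{n-1}s_ns_{n-1}\cdots s_1$. Define $\rho_i=s_{i-1}\cdots s_1s_0$ ($1\le i\le n$), $\rho_i=s_{2n-i+1}\cdots s_{n-1}s_ns_{n-1}\cdots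 s_1s_0$ ($n+1\le i\le 2n$); $v_i=s_i\cdots s_{n-1}s_ns_{n-1}\cdots s_1$ ($1\le i\le n$), $v_i=s_{2n-i}\cdots s_2s_1$ ($n+1\le i\le 2n-1$), $v_{2n}=1$. $\mathscr{P}^n_C$ is the set of partitions $\lambda=(\lambda_1\ge\dots\ge\lambda_l>0)$ with $\lambda_1\le 2n$ such that $\lambda_k<n\Rightarrow\lambda_k>\lambda_{k+1}$ (with $\lambda_{l+1}=0$), and $x_\lambda=\rho_{\lambda_l}\cdots\rho_{\lambda_1}$. *)

theory Defs
  imports Main "HOL-Library.Function_Algebras"
begin

text \<open>Elements of the coweight lattice X^vee = Z^n are represented as functions
  nat => int, coordinate i (1 <= i <= n) being the coefficient of eps_i.
  Elements of the affine Weyl group are represented faithfully by the affine maps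
  they induce: w t_xi acts as x |-> w (x + xi).\<close>

type_synonym vec = "nat \<Rightarrow> int"

definition eps :: "nat \<Rightarrow> vec" where
  "eps i = (\<lambda>j. if j = i then 1 else 0)"

definition transl :: "vec \<Rightarrow> vec \<Rightarrow> vec" where
  "transl \<xi> = (\<lambda>x. x + \<xi>)"

definition sW :: "nat \<Rightarrow> nat \<Rightarrow> vec \<Rightarrow> vec" where
  "sW n i = (if 1 \<le> i \<and> i < n then
               (\<lambda>x j. if j = i then x (i+1) else if j = i + 1 then x i else x j)
             else if i = n then (\<lambda>x j. if j = n then - x j else x j)
             else id)"

definition wordW :: "nat \<Rightarrow> nat list \<Rightarrow> vec \<Rightarrow> vec" where
  "wordW n is = foldr (\<circ>) (map (sW n) is) id"

definition s_theta :: "nat \<Rightarrow> vec \<Rightarrow> vec" where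
  "s_theta n = wordW n ([1..<n] @ [n] @ rev [1..<n])"

definition saf :: "nat \<Rightarrow> nat \<Rightarrow> vec \<Rightarrow> vec" where
  "saf n i = (if i = 0 then s_theta n \<circ> transl (- eps 1) else sW n i)"

definition wordAf :: "nat \<Rightarrow> nat list \<Rightarrow> vec \<Rightarrow> vec" where
  "wordAf n is = foldr (\<circ>) (map (saf n) is) id"

definition rho :: "nat \<Rightarrow> nat \<Rightarrow> vec \<Rightarrow> vec" where
  "rho n i = (if i \<le> n then wordAf n (rev [1..<i] @ [0])
              else wordAf n ([2*n-i+1..<n] @ [n] @ rev [1..<n] @ [0]))"

definition vv :: "nat \<Rightarrow> nat \<Rightarrow> vec \<Rightarrow> vec" where
  "vv n i = (if i \<le> n then wordW n ([i..<n] @ [n] @ rev [1..<n])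
             else if i < 2*n then wordW n (rev [1..<2*n-i+1])
             else id)"

definition PC :: "nat \<Rightarrow> nat list \<Rightarrow> bool" where
  "PC n lam \<longleftrightarrow>
     (\<forall>k < length lam. 0 < lam ! k \<and> lam ! k \<le> 2*n) \<and>
     (\<forall>k. k + 1 < length lam \<longrightarrow> lam ! (k+1) \<le> lam ! k) \<and>
     (\<forall>k < length lam. lam ! k < n \<longrightarrow>
         lam ! k > (if k + 1 < length lam then lam ! (k+1) else 0))"

definition xlam :: "nat \<Rightarrow> nat list \<Rightarrow> vec \<Rightarrow> vec" where
  "xlam n lam = foldr (\<circ>) (map (rho n) (rev lam)) id"

end

theory Submission
  imports Defs HOL.Modules
begin

text \<open>Each rho_a is s_0 = s_theta t_{-eps_1} preceded by a word in s_1,...,s_n which cancels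
  an initial segment of s_theta, so rho_a = v_a t_{-eps_1}.  In a product of affine maps
  x \<mapsto> v_a (x - e) with additive bijective v_a, each new translation is pulled to the
  right through the linear parts accumulated so far, where it becomes
  v_{lam_1}^{-1}...v_{lam_k}^{-1} e; summing these gives xi(lam).\<close>

lemma foldr_comp_eq_comp: "foldr (\<circ>) fs g = foldr (\<circ>) fs id \<circ> g"
  by (induction fs) auto

lemma additive_foldr_comp:
  assumes "\<And>f. f \<in> set fs \<Longrightarrow> additive f"
  shows "additive (foldr (\<circ>) fs id)"
  using assms by (induction fs) (auto simp: additive_def)

lemma foldr_comp_inv_cancel:
  assumes "\<And>f. f \<in> set fs \<Longrightarrow> surj f"
  shows "foldr (\<circ>) fs id (foldr (\<circ>) (map inv (rev fs)) id x) = x"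
  using assms
proof (induction fs arbitrary: x)
  case (Cons f fs)
  have "foldr (\<circ>) (f # fs) id (foldr (\<circ>) (map inv (rev (f # fs))) id x)
        = f (foldr (\<circ>) fs id (foldr (\<circ>) (map inv (rev fs)) id (inv f x)))"
    by (simp add: foldr_comp_eq_comp[of _ "inv f"])
  also have "\<dots> = f (inv f x)"
    using Cons.prems by (simp only: Cons.IH list.set_intros(2))
  also have "\<dots> = x"
    using Cons.prems by (simp add: surj_f_inv_f)
  finally show ?case .
qed simp

lemma foldr_comp_affine:
  fixes f :: "'b \<Rightarrow> 'a::ab_group_add \<Rightarrow> 'a"
  assumes "\<And>a. a \<in> set xs \<Longrightarrow> additive (f a)" and "\<And>a. a \<in> set xs \<Longrightarrow> surj (f a)"
  shows "foldr (\<circ>) (map (\<lambda>a. f a \<circ> (\<lambda>x. x - e)) (rev xs)) id =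
         foldr (\<circ>) (map f (rev xs)) id
         \<circ> (\<lambda>x. x - (\<Sum>k < length xs. foldr (\<circ>) (map (\<lambda>a. inv (f a)) (take k xs)) id e))"
  using assms
proof (induction xs rule: rev_induct)
  case (snoc a xs)
  define F where "F = foldr (\<circ>) (map f (rev xs)) id"
  define U where "U = foldr (\<circ>) (map (\<lambda>a. inv (f a)) xs) id"
  define S where "S = (\<Sum>k < length xs. foldr (\<circ>) (map (\<lambda>a. inv (f a)) (take k xs)) id e)"
  have IH: "foldr (\<circ>) (map (\<lambda>a. f a \<circ> (\<lambda>x. x - e)) (rev xs)) id = F \<circ> (\<lambda>x. x - S)"
    unfolding F_def S_def using snoc.prems by (intro snoc.IH) auto
  have sum: "(\<Sum>k < length (xs @ [a]). foldr (\<circ>) (map (\<lambda>a. inv (f a)) (take k (xs @ [a]))) id e)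
             = S + U e"
    by (simp add: S_def U_def)
  have "additive F"
    unfolding F_def using snoc.prems by (intro additive_foldr_comp) auto
  moreover have "F (U e) = e"
  proof -
    have surj: "\<And>g. g \<in> set (map f (rev xs)) \<Longrightarrow> surj g"
      using snoc.prems by auto
    from foldr_comp_inv_cancel[of "map f (rev xs)" e, OF surj] show ?thesis
      by (simp add: F_def U_def rev_map comp_def)
  qed
  ultimately have shift: "F (x - (S + U e)) = F (x - S) - e" for x
    by (simp add: additive.diff diff_diff_eq[symmetric])
  have snoc_split: "foldr (\<circ>) (map g (rev (xs @ [a]))) id = g a \<circ> foldr (\<circ>) (map g (rev xs)) id"
    for g :: "'b \<Rightarrow> 'a \<Rightarrow> 'a"
    by simp
  show ?case
    unfolding snoc_split F_def[symmetric] IH sum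
    by (intro ext) (simp only: comp_apply shift)
qed (simp add: fun_eq_iff)

lemma sW_sW [simp]: "sW n i (sW n i x) = x"
  unfolding sW_def by (auto simp: fun_eq_iff)

lemma additive_sW: "additive (sW n i)"
  unfolding sW_def by (rule additive.intro) (auto simp: fun_eq_iff)

lemma wordW_Nil [simp]: "wordW n [] = id"
  by (simp add: wordW_def)

lemma wordW_Cons [simp]: "wordW n (i # is) = sW n i \<circ> wordW n is"
  by (simp add: wordW_def)

lemma wordW_append: "wordW n (xs @ ys) = wordW n xs \<circ> wordW n ys"
  by (induction xs) auto

lemma wordW_rev_comp: "wordW n (rev xs) \<circ> wordW n xs = id"
proof (induction xs)
  case (Cons i xs)
  have "wordW n (rev (i # xs)) \<circ> wordW n (i # xs)
        = wordW n (rev xs) \<circ> (sW n i \<circ> sW n i) \<circ> wordW n xs"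
    by (simp add: wordW_append comp_assoc)
  also have "sW n i \<circ> sW n i = id"
    by (simp add: fun_eq_iff)
  finally show ?case
    using Cons.IH by simp
qed simp

lemma wordW_comp_rev: "wordW n xs \<circ> wordW n (rev xs) = id"
  using wordW_rev_comp[of n "rev xs"] by simp

lemma surj_wordW: "surj (wordW n xs)"
  using wordW_comp_rev[of n xs] by (metis comp_apply id_apply surjI)

lemma additive_wordW: "additive (wordW n xs)"
  unfolding wordW_def by (rule additive_foldr_comp) (auto simp: additive_sW)

lemma surj_vv: "surj (vv n i)"
  by (simp add: vv_def surj_wordW)

lemma additive_vv: "additive (vv n i)"
  by (simp add: vv_def additive_wordW additive.intro)

lemma wordAf_append: "wordAf n (xs @ ys) = wordAf n xs \<circ> wordAf n ys"
  by (induction xs) (auto simp: wordAf_def)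

lemma wordAf_eq_wordW: "0 \<notin> set xs \<Longrightarrow> wordAf n xs = wordW n xs"
  by (induction xs) (auto simp: wordAf_def wordW_def saf_def)

lemma wordAf_s0: "wordAf n [0] = s_theta n \<circ> transl (- eps 1)"
  by (simp add: wordAf_def saf_def)

lemma transl_uminus: "transl (- \<xi>) = (\<lambda>x. x - \<xi>)"
  by (simp add: transl_def fun_eq_iff)

lemma rho_eq_vv_comp_transl:
  assumes "1 \<le> a" and "a \<le> 2 * n"
  shows "rho n a = vv n a \<circ> transl (- eps 1)"
proof (cases "a \<le> n")
  case True
  define C where "C = [a..<n] @ [n] @ rev [1..<n]"
  have "[1..<n] = [1..<a] @ [a..<n]"
    using True assms by (metis le_add_diff_inverse upt_add_eq_append)
  then have s_theta: "s_theta n = wordW n [1..<a] \<circ> wordW n C"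
    unfolding s_theta_def C_def by (simp add: wordW_append comp_assoc)
  have "rho n a = wordW n (rev [1..<a]) \<circ> s_theta n \<circ> transl (- eps 1)"
    using True by (simp add: rho_def wordAf_append wordAf_eq_wordW wordAf_s0 comp_assoc)
  also have "\<dots> = (wordW n (rev [1..<a]) \<circ> wordW n [1..<a]) \<circ> wordW n C \<circ> transl (- eps 1)"
    by (simp add: s_theta comp_assoc)
  also have "\<dots> = vv n a \<circ> transl (- eps 1)"
    using True by (simp add: wordW_rev_comp vv_def C_def)
  finally show ?thesis .
next
  case False
  define m where "m = 2 * n - a + 1"
  have m: "1 \<le> m" "m \<le> n"
    using False assms by (auto simp: m_def)
  define A where "A = [m..<n] @ [n] @ rev [1..<n]"
  have "[1..<n] = [1..<m] @ [m..<n]"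
    using m by (metis le_add_diff_inverse upt_add_eq_append)
  then have s_theta_word: "[1..<n] @ [n] @ rev [1..<n] = rev A @ rev [1..<m]"
    unfolding A_def by simp
  have A_no_s0: "0 \<notin> set A"
    using m by (auto simp: A_def)
  have "rho n a = wordAf n (A @ [0])"
    using False by (simp add: rho_def A_def m_def)
  also have "\<dots> = wordW n A \<circ> s_theta n \<circ> transl (- eps 1)"
    by (simp only: wordAf_append wordAf_eq_wordW[OF A_no_s0] wordAf_s0 comp_assoc)
  also have "\<dots> = (wordW n A \<circ> wordW n (rev A)) \<circ> wordW n (rev [1..<m]) \<circ> transl (- eps 1)"
    unfolding s_theta_def s_theta_word by (simp add: wordW_append comp_assoc)
  also have "\<dots> = vv n a \<circ> transl (- eps 1)"
    using False assms by (auto simp: wordW_comp_rev vv_def m_def)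
  finally show ?thesis .
qed

theorem proposition3p2:
  fixes n :: nat and lam :: "nat list"
  assumes "1 \<le> n" and "PC n lam" and "lam \<noteq> []"
  shows "xlam n lam =
           foldr (\<circ>) (map (vv n) (rev lam)) id
           \<circ> transl (- (\<Sum>k < length lam.
                  foldr (\<circ>) (map (\<lambda>i. inv (vv n i)) (take k lam)) id (eps 1)))"
proof -
  have "1 \<le> a \<and> a \<le> 2 * n" if "a \<in> set lam" for a
    using assms(2) that by (fastforce simp: PC_def in_set_conv_nth Suc_le_eq)
  then have "map (rho n) (rev lam) = map (\<lambda>a. vv n a \<circ> (\<lambda>x. x - eps 1)) (rev lam)"
    by (simp add: rho_eq_vv_comp_transl transl_uminus)
  then have "xlam n lam = foldr (\<circ>) (map (\<lambda>a. vv n a \<circ> (\<lambda>x. x - eps 1)) (rev lam)) id"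
    by (simp only: xlam_def)
  also have "\<dots> = foldr (\<circ>) (map (vv n) (rev lam)) id
                  \<circ> (\<lambda>x. x - (\<Sum>k < length lam.
                        foldr (\<circ>) (map (\<lambda>i. inv (vv n i)) (take k lam)) id (eps 1)))"
    by (rule foldr_comp_affine) (simp_all add: additive_vv surj_vv)
  finally show ?thesis
    by (simp only: transl_uminus)
qed

end
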